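(* Let $m\ge2$ and $0<e_0\le1$. For the problem $P_m, e_{i\le m-1,k}\ge e_0\mid\mid C_{\max}$, the LS-ECT schedule (for any list order) satisfies $\frac{C_{\max}(\text{LS-ECT})}{C^*_{\max}}\le 1+\frac{1}{e_0}$, where $C^*_{\max}$ is the optimal makespan.
   Context: Shared-processing parallel machine scheduling: $m$ identical machines $M_1,\dots,M_m$, $n$ primary jobs available at time $0$ with processing times $p_j>0$, each processed without interruption on one machine, jobs on a machine processed one after another. The time axis of machine $M_i$ is partitioned into consecutive intervals $(0,t_{i,1}],(t_{i,1},t_{i,2}],\dots$ with sharing ratios $e_{i,k}\in(0,1]$; during the $k$-th interval $M_i$ processes primary work at rate $e_{i,k}$. In $P_m, e_{i\le m-1,k}\ge e_0\mid\mid C_{\max}$ all sharing ratios on machines $M_1,\dots,M_{m-1}$ are at least $e_0$, the ratios on $M_m$ are arbitrary in $(0,1]$, and the goal is to minimize the makespan. LS-ECT: given an ordered list of jobs, the jobs are scheduled one by one in list order; each job is appended after the jobs already assigned to some machine, choosing the machine on which it would complete earliest. *)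

theory Defs
  imports Complex_Main
begin

text \<open>Machines are indexed 0,...,m-1 (machine i corresponds to M_(i+1)); jobs are
indexed 0,...,n-1. The time axis of machine i is partitioned by the breakpoints
  0 = t i 0 < t i 1 < t i 2 < ...  (unbounded),
and during the k-th interval (t i k, t i (Suc k)] machine i processes primary
work at rate er i k.\<close>

definition valid_profile :: "(nat \<Rightarrow> nat \<Rightarrow> real) \<Rightarrow> (nat \<Rightarrow> nat \<Rightarrow> real) \<Rightarrow> nat \<Rightarrow> bool" where
  "valid_profile t er m \<longleftrightarrow>
     (\<forall>i<m. t i 0 = 0 \<and> strict_mono (t i) \<and> (\<forall>x. \<exists>k. x < t i k)
            \<and> (\<forall>k. 0 < er i k \<and> er i k \<le> 1))"

definition cum_work :: "(nat \<Rightarrow> nat \<Rightarrow> real) \<Rightarrow> (nat \<Rightarrow> nat \<Rightarrow> real) \<Rightarrow> nat \<Rightarrow> real \<Rightarrow> real" where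
  "cum_work t er i x = (\<Sum>k\<in>{k. t i k < x}. er i k * (min x (t i (Suc k)) - t i k))"

definition completes :: "(nat \<Rightarrow> nat \<Rightarrow> real) \<Rightarrow> (nat \<Rightarrow> nat \<Rightarrow> real) \<Rightarrow> nat \<Rightarrow> real \<Rightarrow> real \<Rightarrow> real \<Rightarrow> bool" where
  "completes t er i a p b \<longleftrightarrow> a \<le> b \<and> cum_work t er i b - cum_work t er i a = p"

definition feasible_schedule ::
  "(nat \<Rightarrow> nat \<Rightarrow> real) \<Rightarrow> (nat \<Rightarrow> nat \<Rightarrow> real) \<Rightarrow> nat \<Rightarrow> nat \<Rightarrow> (nat \<Rightarrow> real)
   \<Rightarrow> (nat \<Rightarrow> nat) \<Rightarrow> (nat \<Rightarrow> real) \<Rightarrow> (nat \<Rightarrow> real) \<Rightarrow> bool" where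
  "feasible_schedule t er m n p asg S C \<longleftrightarrow>
     (\<forall>j<n. asg j < m \<and> 0 \<le> S j \<and> completes t er (asg j) (S j) (p j) (C j))
     \<and> (\<forall>j<n. \<forall>j'<n. j \<noteq> j' \<and> asg j = asg j' \<longrightarrow> C j \<le> S j' \<or> C j' \<le> S j)"

definition makespan :: "nat \<Rightarrow> (nat \<Rightarrow> real) \<Rightarrow> real" where
  "makespan n C = Max (insert 0 (C ` {..<n}))"

definition opt_makespan ::
  "(nat \<Rightarrow> nat \<Rightarrow> real) \<Rightarrow> (nat \<Rightarrow> nat \<Rightarrow> real) \<Rightarrow> nat \<Rightarrow> nat \<Rightarrow> (nat \<Rightarrow> real) \<Rightarrow> real" where
  "opt_makespan t er m n p =
     Inf {makespan n C | asg S C. feasible_schedule t er m n p asg S C}"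

definition ls_load :: "nat list \<Rightarrow> (nat \<Rightarrow> nat) \<Rightarrow> (nat \<Rightarrow> real) \<Rightarrow> nat \<Rightarrow> nat \<Rightarrow> real" where
  "ls_load ord asg C q i = Max (insert 0 {C (ord ! r) | r. r < q \<and> asg (ord ! r) = i})"

text \<open>(asg, C) is a schedule produced by LS-ECT for the list ord (with some
tie-breaking): the q-th job of the list is appended on a machine where it
completes earliest among all machines, given the previously scheduled jobs.\<close>
definition ls_ect_schedule ::
  "(nat \<Rightarrow> nat \<Rightarrow> real) \<Rightarrow> (nat \<Rightarrow> nat \<Rightarrow> real) \<Rightarrow> nat \<Rightarrow> nat \<Rightarrow> (nat \<Rightarrow> real)
   \<Rightarrow> nat list \<Rightarrow> (nat \<Rightarrow> nat) \<Rightarrow> (nat \<Rightarrow> real) \<Rightarrow> bool" where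
  "ls_ect_schedule t er m n p ord asg C \<longleftrightarrow>
     (\<forall>q<n. let j = ord ! q in
        asg j < m
        \<and> completes t er (asg j) (ls_load ord asg C q (asg j)) (p j) (C j)
        \<and> (\<forall>i<m. \<forall>c. completes t er i (ls_load ord asg C q i) (p j) c \<longrightarrow> C j \<le> c))"

end

(*
  Compare LS-ECT with an arbitrary feasible schedule of makespan M; every job then has
  p_j <= M, and the machines can process the whole workload by time M. When LS-ECT places
  a job, either some machine with rates at least e0 is loaded only up to some L <= M, and the
  job completes there by L + p_j / e0 <= M + M / e0; or all these machines are loaded beyond M,
  so each of them has already processed at least the work it can do by time M, and the
  total-work comparison leaves enough capacity on the last machine to finish the job by M.
*)
theory Submission
  imports Defs
begin

section \<open>Work processed by a single machine\<close>

locale machine_profile =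
  fixes t er :: "nat \<Rightarrow> nat \<Rightarrow> real" and i :: nat
  assumes breakpoint_0: "t i 0 = 0"
    and breakpoints_strict_mono: "strict_mono (t i)"
    and breakpoints_unbounded: "\<exists>k. x < t i k"
    and rate_pos: "0 < er i k"
    and rate_le_1: "er i k \<le> 1"
begin

abbreviation work :: "real \<Rightarrow> real" where
  "work \<equiv> cum_work t er i"

definition elapsed :: "nat \<Rightarrow> real \<Rightarrow> real" where
  "elapsed k x = min (max x (t i k)) (t i (Suc k)) - t i k"

lemma breakpoint_le_Suc: "t i k \<le> t i (Suc k)"
  using breakpoints_strict_mono by (simp add: strict_mono_less_eq)

lemma breakpoint_nonneg: "0 \<le> t i k"
  using breakpoints_strict_mono breakpoint_0 by (metis le0 strict_mono_less_eq)

lemma cum_work_eq_sum_elapsed: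
  assumes "x \<le> t i N"
  shows "work x = (\<Sum>k<N. er i k * elapsed k x)"
  unfolding cum_work_def elapsed_def
proof (rule sum.mono_neutral_cong_left)
  show "{k. t i k < x} \<subseteq> {..<N}"
    using assms by (auto intro: strict_mono_less[OF breakpoints_strict_mono, THEN iffD1]
        order.strict_trans2)
  show "\<forall>k\<in>{..<N} - {k. t i k < x}. er i k * (min (max x (t i k)) (t i (Suc k)) - t i k) = 0"
    using breakpoint_le_Suc by (auto simp: min_def)
qed auto

lemma sum_elapsed: "(\<Sum>k<N. elapsed k x) = min (max x 0) (t i N)"
proof (induction N)
  case 0
  then show ?case using breakpoint_0 by (simp add: min_def)
next
  case (Suc N)
  then show ?case
    using breakpoint_nonneg[of N] breakpoint_le_Suc[of N]
    by (auto simp: elapsed_def min_def max_def)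
qed

lemma elapsed_mono: "x \<le> y \<Longrightarrow> elapsed k x \<le> elapsed k y"
  unfolding elapsed_def by (simp add: min_def max_def)

lemma cum_work_0: "work 0 = 0"
  using cum_work_eq_sum_elapsed[of 0 0] breakpoint_0 by simp

lemma cum_work_increment_weighted:
  assumes "0 \<le> a" "a \<le> b"
  obtains N d where "\<And>k. 0 \<le> d k" "(\<Sum>k<N. d k) = b - a"
    "work b - work a = (\<Sum>k<N. er i k * d k)"
proof -
  obtain N where N: "b \<le> t i N"
    using breakpoints_unbounded less_imp_le by blast
  define d where "d k = elapsed k b - elapsed k a" for k
  have "\<And>k. 0 \<le> d k"
    unfolding d_def using elapsed_mono assms(2) by simp
  moreover have "(\<Sum>k<N. d k) = b - a"
    unfolding d_def sum_subtractf sum_elapsed using assms N by simp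
  moreover have "work b - work a = (\<Sum>k<N. er i k * d k)"
    unfolding d_def using N assms
    by (simp add: cum_work_eq_sum_elapsed right_diff_distrib sum_subtractf)
  ultimately show thesis by (rule that)
qed

lemma cum_work_increment_le:
  assumes "0 \<le> a" "a \<le> b"
  shows "work b - work a \<le> b - a"
proof -
  obtain N d where d: "\<And>k. 0 \<le> d k" "(\<Sum>k<N. d k) = b - a"
    "work b - work a = (\<Sum>k<N. er i k * d k)"
    using cum_work_increment_weighted[OF assms] by blast
  have "(\<Sum>k<N. er i k * d k) \<le> (\<Sum>k<N. d k)"
    by (intro sum_mono mult_left_le_one_le d rate_le_1 less_imp_le[OF rate_pos])
  with d show ?thesis by simp
qed

lemma cum_work_increment_ge:
  assumes "0 \<le> a" "a \<le> b" "\<And>k. e \<le> er i k"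
  shows "e * (b - a) \<le> work b - work a"
proof -
  obtain N d where d: "\<And>k. 0 \<le> d k" "(\<Sum>k<N. d k) = b - a"
    "work b - work a = (\<Sum>k<N. er i k * d k)"
    using cum_work_increment_weighted[OF assms(1,2)] by blast
  have "(\<Sum>k<N. e * d k) \<le> (\<Sum>k<N. er i k * d k)"
    by (intro sum_mono mult_right_mono assms(3) d)
  with d show ?thesis by (simp add: sum_distrib_left[symmetric])
qed

lemma cum_work_mono: "0 \<le> a \<Longrightarrow> a \<le> b \<Longrightarrow> work a \<le> work b"
  using cum_work_increment_ge[of a b 0] rate_pos less_imp_le by fastforce

lemma continuous_on_cum_work: "continuous_on {..t i N} work"
proof -
  have "continuous_on {..t i N} (\<lambda>x. \<Sum>k<N. er i k * elapsed k x)"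
    unfolding elapsed_def by (intro continuous_intros)
  then show ?thesis
    by (rule continuous_on_cong[THEN iffD1, rotated 2]) (auto simp: cum_work_eq_sum_elapsed)
qed

lemma completes_before:
  assumes "0 \<le> a" "a \<le> b" "0 \<le> w" "work a + w \<le> work b"
  shows "\<exists>c\<le>b. completes t er i a w c"
proof -
  obtain N where "b \<le> t i N"
    using breakpoints_unbounded less_imp_le by blast
  then have "continuous_on {a..b} work"
    by (intro continuous_on_subset[OF continuous_on_cum_work[of N]]) auto
  then obtain c where "a \<le> c" "c \<le> b" "work c = work a + w"
    using IVT'[of work a "work a + w" b] assms by auto
  then show ?thesis
    unfolding completes_def by auto
qed

lemma completes_before_at_min_rate:
  assumes "0 < e" "\<And>k. e \<le> er i k" "0 \<le> a" "0 \<le> w"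
  shows "\<exists>c\<le>a + w / e. completes t er i a w c"
proof (rule completes_before)
  have "w = e * (a + w / e - a)"
    using assms(1) by simp
  also have "\<dots> \<le> work (a + w / e) - work a"
    using assms by (intro cum_work_increment_ge) auto
  finally show "work a + w \<le> work (a + w / e)"
    by simp
qed (use assms in auto)

end

lemma valid_profile_machine_profile:
  "valid_profile t er m \<Longrightarrow> i < m \<Longrightarrow> machine_profile t er i"
  unfolding valid_profile_def machine_profile_def by blast

section \<open>Lower bounds from feasible schedules\<close>

lemma makespan_ge: "j < n \<Longrightarrow> C j \<le> makespan n C"
  unfolding makespan_def by (intro Max_ge) auto

lemma makespan_nonneg: "0 \<le> makespan n C"
  unfolding makespan_def by (intro Max_ge) auto

lemma makespan_le: "0 \<le> B \<Longrightarrow> (\<And>j. j < n \<Longrightarrow> C j \<le> B) \<Longrightarrow> makespan n C \<le> B"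
  unfolding makespan_def by (subst Max_le_iff) auto

lemma feasible_processing_time_le_makespan:
  assumes "valid_profile t er m" "feasible_schedule t er m n p asg S C" "j < n"
  shows "p j \<le> makespan n C"
proof -
  have "asg j < m" "0 \<le> S j" "S j \<le> C j"
    "cum_work t er (asg j) (C j) - cum_work t er (asg j) (S j) = p j"
    using assms(2,3) unfolding feasible_schedule_def completes_def by auto
  then have "p j \<le> C j - S j"
    using machine_profile.cum_work_increment_le[OF valid_profile_machine_profile[OF assms(1)]]
    by metis
  also have "\<dots> \<le> makespan n C"
    using makespan_ge[OF assms(3), of C] \<open>0 \<le> S j\<close> by simp
  finally show ?thesis .
qed

text \<open>Jobs of positive length cannot be nested, so on each machine the job completing last
  starts after all the others have completed.\<close>
lemma feasible_machine_work:
  assumes "valid_profile t er m" "feasible_schedule t er m n p asg S C" "\<And>j. j < n \<Longrightarrow> 0 < p j"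
    and "i < m" "finite J" "J \<subseteq> {j. j < n \<and> asg j = i}" "0 \<le> T" "\<And>j. j \<in> J \<Longrightarrow> C j \<le> T"
  shows "sum p J \<le> cum_work t er i T"
proof -
  interpret machine_profile t er i
    using valid_profile_machine_profile assms(1,4) .
  have job: "0 \<le> S j" "S j \<le> C j" "work (C j) - work (S j) = p j" if "j < n" "asg j = i" for j
    using assms(2) that unfolding feasible_schedule_def completes_def by auto
  show ?thesis
    using assms(5-8)
  proof (induction J arbitrary: T rule: finite_ranking_induct[where f = C])
    case empty
    then show ?case
      using cum_work_mono[of 0 T] cum_work_0 by simp
  next
    case (insert x J)
    show ?case
    proof (cases "x \<in> J")
      case True
      with insert show ?thesis by (simp add: insert_absorb)
    next
      case False
      have x: "x < n" "asg x = i"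
        using insert.prems(1) by auto
      have "C y \<le> S x" if "y \<in> J" for y
      proof -
        have y: "y < n" "asg y = i"
          using that insert.prems(1) by auto
        have "\<not> C x \<le> S y"
        proof
          assume "C x \<le> S y"
          then have "S y = C y"
            using insert.hyps(2)[OF that] job(2)[OF y] by linarith
          then show False
            using assms(3)[OF y(1)] job(3)[OF y] by simp
        qed
        then show ?thesis
          using assms(2) x y False that unfolding feasible_schedule_def by (metis (no_types))
      qed
      then have "sum p J \<le> work (S x)"
        using insert.IH insert.prems(1) job(1)[OF x] by blast
      then have "sum p (insert x J) \<le> work (C x)"
        using job(3)[OF x] insert.hyps(1) False by simp
      also have "\<dots> \<le> work T"
        using cum_work_mono job(1,2)[OF x] insert.prems(3) by force
      finally show ?thesis .
    qed
  qed
qed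

lemma feasible_total_work:
  assumes "valid_profile t er m" "feasible_schedule t er m n p asg S C" "\<And>j. j < n \<Longrightarrow> 0 < p j"
  shows "(\<Sum>j<n. p j) \<le> (\<Sum>i<m. cum_work t er i (makespan n C))"
proof -
  have "(\<Sum>j<n. p j) = (\<Sum>i<m. sum p {j \<in> {..<n}. asg j = i})"
    using assms(2) unfolding feasible_schedule_def by (intro sum.group[symmetric]) auto
  also have "\<dots> \<le> (\<Sum>i<m. cum_work t er i (makespan n C))"
    using assms by (intro sum_mono feasible_machine_work) (auto simp: makespan_ge makespan_nonneg)
  finally show ?thesis .
qed

section \<open>LS-ECT schedules\<close>

lemma ls_load_nonneg: "0 \<le> ls_load ord asg C q i"
  unfolding ls_load_def by (intro Max_ge) (auto intro: finite_image_set)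

lemma completion_le_ls_load: "r < q \<Longrightarrow> asg (ord ! r) = i \<Longrightarrow> C (ord ! r) \<le> ls_load ord asg C q i"
  unfolding ls_load_def by (intro Max_ge) (auto intro: finite_image_set)

lemma ls_load_Suc:
  "ls_load ord asg C (Suc q) i =
    (if asg (ord ! q) = i then max (C (ord ! q)) (ls_load ord asg C q i) else ls_load ord asg C q i)"
proof -
  define A where "A = {C (ord ! r) | r. r < q \<and> asg (ord ! r) = i}"
  have "finite A"
    unfolding A_def by (intro finite_image_set) simp
  moreover have "{C (ord ! r) | r. r < Suc q \<and> asg (ord ! r) = i} =
      (if asg (ord ! q) = i then insert (C (ord ! q)) A else A)"
    unfolding A_def by (auto simp: less_Suc_eq)
  moreover have "Max (insert 0 (insert (C (ord ! q)) A)) = max (C (ord ! q)) (Max (insert 0 A))"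
    using \<open>finite A\<close> by (metis Max_insert finite_insert insert_commute insert_not_empty)
  ultimately show ?thesis
    unfolding ls_load_def A_def[symmetric] by simp
qed

locale ls_ect =
  fixes t er :: "nat \<Rightarrow> nat \<Rightarrow> real" and m n :: nat and p :: "nat \<Rightarrow> real"
    and ord :: "nat list" and asg :: "nat \<Rightarrow> nat" and C :: "nat \<Rightarrow> real"
  assumes valid: "valid_profile t er m"
    and processing_time_pos: "j < n \<Longrightarrow> 0 < p j"
    and distinct_ord: "distinct ord"
    and set_ord: "set ord = {..<n}"
    and schedule: "ls_ect_schedule t er m n p ord asg C"
begin

abbreviation load :: "nat \<Rightarrow> nat \<Rightarrow> real" where
  "load \<equiv> ls_load ord asg C"

lemma bij_betw_ord: "bij_betw ((!) ord) {..<n} {..<n}"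
  using distinct_ord set_ord distinct_card[OF distinct_ord]
  by (intro bij_betw_nth) auto

lemma ord_nth_less: "r < n \<Longrightarrow> ord ! r < n"
  using bij_betw_ord bij_betwE by blast

lemma assigned_machine_less: "r < n \<Longrightarrow> asg (ord ! r) < m"
  using schedule unfolding ls_ect_schedule_def Let_def by auto

lemma completes_after_load:
  "r < n \<Longrightarrow> completes t er (asg (ord ! r)) (load r (asg (ord ! r))) (p (ord ! r)) (C (ord ! r))"
  using schedule unfolding ls_ect_schedule_def Let_def by auto

lemma earliest_completion:
  "r < n \<Longrightarrow> i < m \<Longrightarrow> completes t er i (load r i) (p (ord ! r)) c \<Longrightarrow> C (ord ! r) \<le> c"
  using schedule unfolding ls_ect_schedule_def Let_def by auto

lemma cum_work_load:
  assumes "i < m" "q \<le> n"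
  shows "cum_work t er i (load q i) = (\<Sum>r | r < q \<and> asg (ord ! r) = i. p (ord ! r))"
  using assms(2)
proof (induction q)
  case 0
  interpret machine_profile t er i
    using valid_profile_machine_profile valid assms(1) .
  show ?case
    using cum_work_0 by (simp add: ls_load_def)
next
  case (Suc q)
  show ?case
  proof (cases "asg (ord ! q) = i")
    case True
    have "load q i \<le> C (ord ! q)"
      "cum_work t er i (C (ord ! q)) - cum_work t er i (load q i) = p (ord ! q)"
      using completes_after_load[of q] Suc.prems True unfolding completes_def by auto
    moreover have "{r. r < Suc q \<and> asg (ord ! r) = i} = insert q {r. r < q \<and> asg (ord ! r) = i}"
      using True by auto
    ultimately show ?thesis
      using Suc True by (simp add: ls_load_Suc)
  next
    case False
    then have "{r. r < Suc q \<and> asg (ord ! r) = i} = {r. r < q \<and> asg (ord ! r) = i}"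
      by (auto simp: less_Suc_eq)
    then show ?thesis
      using Suc False by (simp add: ls_load_Suc)
  qed
qed

lemma total_cum_work_load:
  assumes "q \<le> n"
  shows "(\<Sum>i<m. cum_work t er i (load q i)) = (\<Sum>r<q. p (ord ! r))"
proof -
  have "(\<Sum>i<m. cum_work t er i (load q i)) = (\<Sum>i<m. \<Sum>r\<in>{r \<in> {..<q}. asg (ord ! r) = i}. p (ord ! r))"
    using assms by (intro sum.cong) (auto simp: cum_work_load)
  also have "\<dots> = (\<Sum>r<q. p (ord ! r))"
    using assms by (intro sum.group) (auto intro: assigned_machine_less)
  finally show ?thesis .
qed

lemma sum_prefix_le_total:
  assumes "q \<le> n"
  shows "(\<Sum>r<q. p (ord ! r)) \<le> (\<Sum>j<n. p j)"
proof -
  have "(\<Sum>r<q. p (ord ! r)) \<le> (\<Sum>r<n. p (ord ! r))"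
    using assms by (intro sum_mono2) (auto intro: less_imp_le processing_time_pos ord_nth_less)
  also have "\<dots> = (\<Sum>j<n. p j)"
    using sum.reindex_bij_betw[OF bij_betw_ord] .
  finally show ?thesis .
qed

definition position :: "nat \<Rightarrow> nat" where
  "position = the_inv_into {..<n} ((!) ord)"

lemma
  assumes "j < n"
  shows position_less: "position j < n" and nth_position: "ord ! position j = j"
  unfolding position_def
  using bij_betw_apply[OF bij_betw_the_inv_into[OF bij_betw_ord]]
    f_the_inv_into_f_bij_betw[OF bij_betw_ord] assms
  by simp_all

lemma feasible_ls_ect: "feasible_schedule t er m n p asg (\<lambda>j. load (position j) (asg j)) C"
  unfolding feasible_schedule_def
proof (intro conjI allI impI)
  fix j assume "j < n"
  then have "position j < n" "ord ! position j = j"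
    by (simp_all add: position_less nth_position)
  then show "asg j < m" "0 \<le> load (position j) (asg j)"
    "completes t er (asg j) (load (position j) (asg j)) (p j) (C j)"
    using assigned_machine_less[of "position j"] completes_after_load[of "position j"]
    by (simp_all add: ls_load_nonneg)
next
  fix j j' assume "j < n" "j' < n" and jj': "j \<noteq> j' \<and> asg j = asg j'"
  then have pos: "position j \<noteq> position j'" "ord ! position j = j" "ord ! position j' = j'"
    using nth_position by metis+
  have "C j \<le> load (position j') (asg j')" if "position j < position j'"
    using completion_le_ls_load[OF that] pos(2) jj' by metis
  moreover have "C j' \<le> load (position j) (asg j)" if "position j' < position j"
    using completion_le_ls_load[OF that] pos(3) jj' by metis
  ultimately show "C j \<le> load (position j') (asg j') \<or> C j' \<le> load (position j) (asg j)"
    using pos(1) by linarith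
qed

lemma completion_le_load_at_min_rate:
  assumes "q < n" "i < m" "0 < e" "\<And>k. e \<le> er i k"
  shows "C (ord ! q) \<le> load q i + p (ord ! q) / e"
proof -
  interpret machine_profile t er i
    using valid_profile_machine_profile valid assms(2) .
  have "0 \<le> p (ord ! q)"
    using processing_time_pos[OF ord_nth_less[OF assms(1)]] by simp
  then obtain c where "c \<le> load q i + p (ord ! q) / e" "completes t er i (load q i) (p (ord ! q)) c"
    using completes_before_at_min_rate[OF assms(3,4) ls_load_nonneg] by blast
  then show ?thesis
    using earliest_completion assms(1,2) by fastforce
qed

text \<open>Each machine but the last has already processed at least the work it can do by time M,
  so the capacity of the last machine up to M covers its current load plus the job.\<close>
lemma completion_le_if_loads_exceed:
  assumes "q < n" "(\<Sum>j<n. p j) \<le> (\<Sum>i<m. cum_work t er i M)" "0 \<le> M"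
    and "\<And>i. i < m - 1 \<Longrightarrow> M < load q i"
  shows "C (ord ! q) \<le> M"
proof -
  define l where "l = m - 1"
  have m: "m = Suc l"
    using assigned_machine_less[OF assms(1)] unfolding l_def by simp
  have machine: "machine_profile t er i" if "i < m" for i
    using valid_profile_machine_profile valid that .
  have "(\<Sum>i<m. cum_work t er i (load q i)) + p (ord ! q) = (\<Sum>r<Suc q. p (ord ! r))"
    using total_cum_work_load assms(1) by simp
  also have "\<dots> \<le> (\<Sum>i<m. cum_work t er i M)"
    using sum_prefix_le_total[of "Suc q"] assms(1,2) by simp
  finally have total: "(\<Sum>i<m. cum_work t er i (load q i)) + p (ord ! q) \<le> (\<Sum>i<m. cum_work t er i M)" .
  have "(\<Sum>i<l. cum_work t er i M) \<le> (\<Sum>i<l. cum_work t er i (load q i))"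
    using assms(3,4) machine_profile.cum_work_mono[OF machine] unfolding l_def
    by (intro sum_mono) (simp add: less_imp_le)
  with total have room: "cum_work t er l (load q l) + p (ord ! q) \<le> cum_work t er l M"
    unfolding m by simp
  interpret machine_profile t er l
    using machine m by simp
  have "load q l \<le> M"
  proof (rule ccontr)
    assume "\<not> load q l \<le> M"
    then have "work M \<le> work (load q l)"
      using cum_work_mono assms(3) by simp
    with room show False
      using processing_time_pos[OF ord_nth_less[OF assms(1)]] by simp
  qed
  then obtain c where "c \<le> M" "completes t er l (load q l) (p (ord ! q)) c"
    using completes_before[OF ls_load_nonneg _ _ room]
      processing_time_pos[OF ord_nth_less[OF assms(1)]] by fastforce
  then show ?thesis
    using earliest_completion assms(1) m by fastforce
qed

lemma makespan_le_feasible_makespan: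
  assumes "0 < e0" "\<And>i k. i < m - 1 \<Longrightarrow> e0 \<le> er i k"
    and "feasible_schedule t er m n p asg' S' C'"
  shows "makespan n C \<le> (1 + 1 / e0) * makespan n C'"
proof (rule makespan_le)
  define M where "M = makespan n C'"
  have M: "0 \<le> M" "(\<Sum>j<n. p j) \<le> (\<Sum>i<m. cum_work t er i M)"
    unfolding M_def using feasible_total_work[OF valid assms(3) processing_time_pos]
    by (simp_all add: makespan_nonneg)
  show "0 \<le> (1 + 1 / e0) * M"
    using M assms(1) by simp
  fix j assume "j < n"
  define q where "q = position j"
  have q: "q < n" "ord ! q = j"
    unfolding q_def using \<open>j < n\<close> by (simp_all add: position_less nth_position)
  have "p j \<le> M"
    unfolding M_def using feasible_processing_time_le_makespan[OF valid assms(3) \<open>j < n\<close>] .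
  show "C j \<le> (1 + 1 / e0) * M"
  proof (cases "\<exists>i<m - 1. load q i \<le> M")
    case True
    then obtain i where "i < m - 1" "load q i \<le> M"
      by blast
    then have "C j \<le> load q i + p j / e0"
      using completion_le_load_at_min_rate[OF q(1) _ assms(1)] assms(2) q(2) by simp
    also have "\<dots> \<le> M + M / e0"
      using \<open>load q i \<le> M\<close> \<open>p j \<le> M\<close> assms(1) by (intro add_mono divide_right_mono) simp_all
    finally show ?thesis
      by (simp add: algebra_simps)
  next
    case False
    then have "C j \<le> M"
      using completion_le_if_loads_exceed[OF q(1) M(2,1)] q(2) by (simp add: not_le)
    also have "\<dots> \<le> M + M / e0"
      using M(1) assms(1) by simp
    finally show ?thesis
      by (simp add: algebra_simps)
  qed
qed

end

theorem theorem4: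
  fixes m n :: nat and e0 :: real and t er :: "nat \<Rightarrow> nat \<Rightarrow> real"
    and p :: "nat \<Rightarrow> real" and ord :: "nat list"
    and asg :: "nat \<Rightarrow> nat" and C :: "nat \<Rightarrow> real"
  assumes "m \<ge> 2" and "0 < e0" and "e0 \<le> 1"
    and "valid_profile t er m"
    and "\<forall>i<m - 1. \<forall>k. e0 \<le> er i k"
    and "\<forall>j<n. 0 < p j"
    and "distinct ord" and "set ord = {..<n}"
    and "ls_ect_schedule t er m n p ord asg C"
  shows "makespan n C \<le> (1 + 1 / e0) * opt_makespan t er m n p"
proof -
  interpret ls_ect t er m n p ord asg C
    using assms(4,6-9) by unfold_locales auto
  define K where "K = 1 + 1 / e0"
  have "0 < K"
    unfolding K_def using assms(2) by (simp add: add_pos_pos)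
  let ?Ms = "{makespan n C' | asg' S' C'. feasible_schedule t er m n p asg' S' C'}"
  have "?Ms \<noteq> {}"
    using feasible_ls_ect by blast
  moreover have "makespan n C / K \<le> M" if "M \<in> ?Ms" for M
    using that makespan_le_feasible_makespan[of e0] assms(2,5) \<open>0 < K\<close>
    unfolding K_def by (auto simp: divide_le_eq mult.commute)
  ultimately have "makespan n C / K \<le> Inf ?Ms"
    by (rule cInf_greatest)
  then show ?thesis
    unfolding opt_makespan_def K_def[symmetric] using \<open>0 < K\<close> by (simp add: divide_le_eq mult.commute)
qed

end
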